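(* Let $(M,\circ,\mathrm{OR})$ be a free $\mathbb{D}$-module of rank 3 with scalar product and orientation, and let $x,y\in M\setminus\epsilon M$ with $x\circ x=y\circ y=1$ and with linearly independent resultants $\pi(x),\pi(y)$. Then $\mathfrak{Du}(x\circ y)=0$ if and only if the axes of $x$ and $y$ intersect. (Consequently $x\circ y=0$ iff their axes intersect orthogonally.)
   Context: $\mathbb{D}=\{a+\epsilon b: a,b\in\mathbb{R}\}$, $\epsilon^2=0$, $\mathfrak{Re},\mathfrak{Du}$ real and dual parts. Scalar product: symmetric $\mathbb{D}$-bilinear $\circ:M\times M\to\mathbb{D}$ with $\mathfrak{Re}(x\circ x)\ge0$, equality iff $x\in\epsilon M$; orientation: one of the two classes of ordered bases under $\{b'_j=A_{jk}b_k\}\sim\{b_k\}$ iff $\det\mathfrak{Re}(A)>0$. $V=M/\epsilon M$, $\pi$ the quotient (resultant) map. $E$ is the set of real 3-dimensional subspaces $P\subset M$ with $\mathfrak{Du}(x\circ y)=0$ for $x,y\in P$ and $P\cap\epsilon M=\{0\}$, a Euclidean affine space over $V$ (with $B-A:=d^ke_k$ where $e^B_i=e^A_i+\epsilon\,\epsilon_{ijk}d^ke^A_j$, $\{e_i\}$ positive orthonormal in $V$, $e^P_i\in P$ its lift). For $u\in M$ with $u\circ u=1$, its axis is the line $\{P\in E: u\in P\}$ of $E$. *)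

theory Defs
  imports "HOL-Analysis.Analysis"
begin

datatype dual = Dual (dRe: real) (dDu: real)

lemma dual_eq_iff: "x = y \<longleftrightarrow> dRe x = dRe y \<and> dDu x = dDu y"
  by (cases x; cases y) auto

instantiation dual :: comm_ring_1
begin
definition "0 = Dual 0 0"
definition "1 = Dual 1 0"
definition "x + y = Dual (dRe x + dRe y) (dDu x + dDu y)"
definition "x - y = Dual (dRe x - dRe y) (dDu x - dDu y)"
definition "- x = Dual (- dRe x) (- dDu x)"
definition "x * y = Dual (dRe x * dRe y) (dRe x * dDu y + dDu x * dRe y)"
instance
  by standard (auto simp: dual_eq_iff zero_dual_def one_dual_def plus_dual_def
      minus_dual_def uminus_dual_def times_dual_def algebra_simps)
end

definition eps :: dual where "eps = Dual 0 1"

definition dbasis3 :: "(dual \<Rightarrow> 'm::ab_group_add \<Rightarrow> 'm) \<Rightarrow> 'm^3 \<Rightarrow> bool" where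
  "dbasis3 sc b \<longleftrightarrow> (\<forall>x. \<exists>!c::dual^3. x = (\<Sum>k\<in>UNIV. sc (c$k) (b$k)))"

definition free_rank3 :: "(dual \<Rightarrow> 'm::ab_group_add \<Rightarrow> 'm) \<Rightarrow> bool" where
  "free_rank3 sc \<longleftrightarrow> module sc \<and> (\<exists>b. dbasis3 sc b)"

definition epsM :: "(dual \<Rightarrow> 'm::ab_group_add \<Rightarrow> 'm) \<Rightarrow> 'm set" where
  "epsM sc = range (sc eps)"

definition scalar_product :: "(dual \<Rightarrow> 'm::ab_group_add \<Rightarrow> 'm) \<Rightarrow> ('m \<Rightarrow> 'm \<Rightarrow> dual) \<Rightarrow> bool" where
  "scalar_product sc circ \<longleftrightarrow>
     (\<forall>x y. circ x y = circ y x) \<and>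
     (\<forall>a x y z. circ (sc a x + y) z = a * circ x z + circ y z) \<and>
     (\<forall>x. dRe (circ x x) \<ge> 0) \<and>
     (\<forall>x. dRe (circ x x) = 0 \<longleftrightarrow> x \<in> epsM sc)"

definition same_orientation :: "(dual \<Rightarrow> 'm::ab_group_add \<Rightarrow> 'm) \<Rightarrow> 'm^3 \<Rightarrow> 'm^3 \<Rightarrow> bool" where
  "same_orientation sc b' b \<longleftrightarrow>
     (\<exists>A::dual^3^3. (\<forall>j. b'$j = (\<Sum>k\<in>UNIV. sc (A$j$k) (b$k))) \<and>
                   det (\<chi> j k. dRe (A$j$k)) > 0)"

definition orientation :: "(dual \<Rightarrow> 'm::ab_group_add \<Rightarrow> 'm) \<Rightarrow> ('m^3) set \<Rightarrow> bool" where
  "orientation sc OR \<longleftrightarrow>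
     (\<exists>b. dbasis3 sc b \<and> OR = {b'. dbasis3 sc b' \<and> same_orientation sc b' b})"

definition rscale :: "(dual \<Rightarrow> 'm::ab_group_add \<Rightarrow> 'm) \<Rightarrow> real \<Rightarrow> 'm \<Rightarrow> 'm" where
  "rscale sc r x = sc (Dual r 0) x"

text \<open>pi(x), pi(y) linearly independent in V = M / eps M (over R = D / eps D):
  a pi(x) + b pi(y) = 0, i.e. a x + b y in eps M, forces a = b = 0.\<close>
definition resultants_indep :: "(dual \<Rightarrow> 'm::ab_group_add \<Rightarrow> 'm) \<Rightarrow> 'm \<Rightarrow> 'm \<Rightarrow> bool" where
  "resultants_indep sc x y \<longleftrightarrow>
     (\<forall>a b::real. rscale sc a x + rscale sc b y \<in> epsM sc \<longrightarrow> a = 0 \<and> b = 0)"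

definition real_subspace3 :: "(dual \<Rightarrow> 'm::ab_group_add \<Rightarrow> 'm) \<Rightarrow> 'm set \<Rightarrow> bool" where
  "real_subspace3 sc P \<longleftrightarrow>
     (\<exists>p::'m^3.
        P = {u. \<exists>r::real^3. u = (\<Sum>k\<in>UNIV. rscale sc (r$k) (p$k))} \<and>
        (\<forall>r::real^3. (\<Sum>k\<in>UNIV. rscale sc (r$k) (p$k)) = 0 \<longrightarrow> r = 0))"

definition Espace :: "(dual \<Rightarrow> 'm::ab_group_add \<Rightarrow> 'm) \<Rightarrow> ('m \<Rightarrow> 'm \<Rightarrow> dual) \<Rightarrow> 'm set set" where
  "Espace sc circ =
     {P. real_subspace3 sc P \<and> (\<forall>u\<in>P. \<forall>v\<in>P. dDu (circ u v) = 0) \<and> P \<inter> epsM sc = {0}}"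

definition axis :: "(dual \<Rightarrow> 'm::ab_group_add \<Rightarrow> 'm) \<Rightarrow> ('m \<Rightarrow> 'm \<Rightarrow> dual) \<Rightarrow> 'm \<Rightarrow> 'm set set" where
  "axis sc circ u = {P \<in> Espace sc circ. u \<in> P}"

end

(* If Du(x o y) = 0, then x o y is real, so Gram-Schmidt over the dual numbers replaces y by a
   unit vector e orthogonal to x with y in the real span of x and e. In rank 3 some real
   combination m of a basis has inner products with x and e that vanish modulo eps; its
   projection onto the orthogonal complement of x and e is then congruent to m modulo eps M,
   hence not in eps M, and after rescaling completes x, e to an orthonormal triple. The real
   span of an orthonormal triple has a real Gram matrix and meets eps M only in 0, so it is a
   point of E lying on both axes. *)
theory Submission
  imports Defs
begin

lemma dual_sel_simps [simp]:
  "dRe 0 = 0" "dDu 0 = 0" "dRe 1 = 1" "dDu 1 = 0"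
  "dRe (a + b) = dRe a + dRe b" "dDu (a + b) = dDu a + dDu b"
  "dRe (a - b) = dRe a - dRe b" "dDu (a - b) = dDu a - dDu b"
  "dRe (- a) = - dRe a" "dDu (- a) = - dDu a"
  "dRe (a * b) = dRe a * dRe b" "dDu (a * b) = dRe a * dDu b + dDu a * dRe b"
  "dRe eps = 0" "dDu eps = 1"
  by (simp_all add: zero_dual_def one_dual_def plus_dual_def minus_dual_def
      uminus_dual_def times_dual_def eps_def)

lemma Dual_0_0 [simp]: "Dual 0 0 = 0" and Dual_1_0 [simp]: "Dual 1 0 = 1"
  by (simp_all add: zero_dual_def one_dual_def)

lemma dRe_sum: "dRe (sum f A) = (\<Sum>a\<in>A. dRe (f a))"
  and dDu_sum: "dDu (sum f A) = (\<Sum>a\<in>A. dDu (f a))"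
  by (induct A rule: infinite_finite_induct) auto

lemma dual_eq_eps_times_iff: "dRe a = 0 \<longleftrightarrow> (\<exists>c. a = eps * c)"
proof
  assume "dRe a = 0"
  then have "a = eps * Dual (dDu a) 0"
    by (simp add: dual_eq_iff)
  then show "\<exists>c. a = eps * c" ..
qed auto

definition dual_inv_sqrt :: "dual \<Rightarrow> dual" where
  "dual_inv_sqrt a = Dual (1 / sqrt (dRe a)) (- dDu a / (2 * dRe a * sqrt (dRe a)))"

lemma dual_inv_sqrt_square: "0 < dRe a \<Longrightarrow> dual_inv_sqrt a * dual_inv_sqrt a * a = 1"
  by (simp add: dual_inv_sqrt_def dual_eq_iff field_simps)

lemma dual_inv_sqrt_real: "dDu a = 0 \<Longrightarrow> dual_inv_sqrt a = Dual (1 / sqrt (dRe a)) 0"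
  by (simp add: dual_inv_sqrt_def)

lemma exists_orthogonal_to_pair:
  fixes u w :: "'a::euclidean_space"
  assumes "2 < DIM('a)"
  obtains r where "r \<noteq> 0" "r \<bullet> u = 0" "r \<bullet> w = 0"
proof -
  have "dim {u, w} \<le> card {u, w}"
    by (rule dim_le_card') simp
  also have "\<dots> \<le> 2"
    by (simp add: card_insert_le_m1)
  finally obtain r where "r \<noteq> 0" "\<And>v. v \<in> span {u, w} \<Longrightarrow> orthogonal r v"
    using assms orthogonal_to_subspace_exists[of "{u, w}"] by (metis le_less_trans)
  then show ?thesis
    using that span_base[of u "{u, w}"] span_base[of w "{u, w}"] by (simp add: orthogonal_def)
qed

locale dual_scalar_product = module sc for sc :: "dual \<Rightarrow> 'm::ab_group_add \<Rightarrow> 'm" +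
  fixes circ :: "'m \<Rightarrow> 'm \<Rightarrow> dual"
  assumes scalar_product: "scalar_product sc circ"
begin

lemma circ_sym: "circ x y = circ y x"
  using scalar_product unfolding scalar_product_def by blast

lemma circ_linear: "circ (sc a x + y) z = a * circ x z + circ y z"
  using scalar_product unfolding scalar_product_def by blast

lemma circ_self_nonneg: "0 \<le> dRe (circ x x)"
  using scalar_product unfolding scalar_product_def by blast

lemma circ_self_eq_0_iff: "dRe (circ x x) = 0 \<longleftrightarrow> x \<in> epsM sc"
  using scalar_product unfolding scalar_product_def by blast

lemma circ_self_pos: "x \<notin> epsM sc \<Longrightarrow> 0 < dRe (circ x x)"
  using circ_self_nonneg[of x] circ_self_eq_0_iff[of x] by linarith

lemma circ_zero_left [simp]: "circ 0 z = 0"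
  using circ_linear[of 1 0 0 z] by simp

lemma circ_scale_left [simp]: "circ (sc a x) z = a * circ x z"
  using circ_linear[of a x 0 z] by simp

lemma circ_add_left [simp]: "circ (x + y) z = circ x z + circ y z"
  using circ_linear[of 1 x y z] by simp

lemma circ_diff_left [simp]: "circ (x - y) z = circ x z - circ y z"
  using circ_add_left[of "x - y" y z] by (simp add: algebra_simps)

lemma circ_sum_left: "circ (sum f A) z = (\<Sum>a\<in>A. circ (f a) z)"
  by (induct A rule: infinite_finite_induct) auto

lemma circ_scale_right [simp]: "circ z (sc a x) = a * circ z x"
  by (metis circ_sym circ_scale_left)

lemma circ_diff_right [simp]: "circ z (x - y) = circ z x - circ z y"
  by (metis circ_sym circ_diff_left)

lemma circ_sum_right: "circ z (sum f A) = (\<Sum>a\<in>A. circ z (f a))"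
  by (simp add: circ_sym[of z] circ_sum_left)

lemma circ_rscale_left [simp]: "circ (rscale sc r x) z = Dual r 0 * circ x z"
  and circ_rscale_right [simp]: "circ z (rscale sc r x) = Dual r 0 * circ z x"
  by (simp_all add: rscale_def)

lemma rscale_zero_left [simp]: "rscale sc 0 x = 0"
  and rscale_one [simp]: "rscale sc 1 x = x"
  by (simp_all add: rscale_def)

lemma epsM_zero: "0 \<in> epsM sc"
  using scale_zero_right[of eps] unfolding epsM_def by (metis rangeI)

lemma epsM_add: "u \<in> epsM sc \<Longrightarrow> v \<in> epsM sc \<Longrightarrow> u + v \<in> epsM sc"
  by (auto simp: epsM_def scale_right_distrib[symmetric])

lemma scale_in_epsM: "dRe a = 0 \<Longrightarrow> sc a u \<in> epsM sc"
proof -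
  assume "dRe a = 0"
  then obtain c where "a = eps * c"
    unfolding dual_eq_eps_times_iff ..
  then have "sc a u = sc eps (sc c u)"
    by simp
  then show ?thesis
    unfolding epsM_def by (rule range_eqI)
qed

lemma real_combination_in_epsM_imp_zero:
  assumes basis: "dbasis3 sc b" and "(\<Sum>k\<in>UNIV. rscale sc (r$k) (b$k)) \<in> epsM sc"
  shows "r = 0"
proof -
  obtain w where w: "(\<Sum>k\<in>UNIV. sc (Dual (r$k) 0) (b$k)) = sc eps w"
    using assms(2) by (auto simp: epsM_def rscale_def)
  obtain c :: "dual^3" where "w = (\<Sum>k\<in>UNIV. sc (c$k) (b$k))"
    using basis unfolding dbasis3_def by (meson ex1_implies_ex)
  then have "(\<Sum>k\<in>UNIV. sc ((\<chi> k. Dual (r$k) 0)$k) (b$k))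
      = (\<Sum>k\<in>UNIV. sc ((\<chi> k. eps * c$k)$k) (b$k))"
    by (simp add: w scale_sum_right)
  then have "(\<chi> k. Dual (r$k) 0) = (\<chi> k. eps * c$k)"
    using basis unfolding dbasis3_def by blast
  then have "dRe (Dual (r$k) 0) = dRe (eps * c$k)" for k
    by (metis vec_lambda_beta)
  then show "r = 0"
    by (simp add: vec_eq_iff)
qed

lemma circ_real_combination:
  fixes r q :: "real^'n"
  assumes orthonormal: "\<And>i j. circ (p$i) (p$j) = of_bool (i = j)"
  shows "circ (\<Sum>i\<in>UNIV. rscale sc (r$i) (p$i)) (\<Sum>j\<in>UNIV. rscale sc (q$j) (p$j))
    = Dual (r \<bullet> q) 0"
proof -
  have coordinate: "circ (\<Sum>i\<in>UNIV. rscale sc (r$i) (p$i)) (p$j) = Dual (r$j) 0" for j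
    by (simp add: circ_sum_left orthonormal)
  have "circ (\<Sum>i\<in>UNIV. rscale sc (r$i) (p$i)) (\<Sum>j\<in>UNIV. rscale sc (q$j) (p$j))
      = (\<Sum>j\<in>UNIV. Dual (q$j) 0 * Dual (r$j) 0)"
    by (simp add: circ_sum_right coordinate)
  also have "\<dots> = Dual (r \<bullet> q) 0"
    by (simp add: dual_eq_iff dRe_sum dDu_sum inner_vec_def mult.commute)
  finally show ?thesis .
qed

lemma orthonormal_real_span_in_Espace:
  fixes p :: "'m^3"
  assumes orthonormal: "\<And>i j. circ (p$i) (p$j) = of_bool (i = j)"
  shows "{u. \<exists>r. u = (\<Sum>k\<in>UNIV. rscale sc (r$k) (p$k))} \<in> Espace sc circ"
proof -
  have in_epsM_imp_zero: "r = 0" if "(\<Sum>k\<in>UNIV. rscale sc (r$k) (p$k)) \<in> epsM sc" for r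
  proof -
    have "dRe (Dual (r \<bullet> r) 0) = 0"
      using that circ_self_eq_0_iff circ_real_combination[OF orthonormal, of r r] by metis
    then show ?thesis
      by simp
  qed
  show ?thesis
    unfolding Espace_def real_subspace3_def
    using in_epsM_imp_zero epsM_zero
    by (auto simp: circ_real_combination[OF orthonormal] intro: exI[of _ 0]) fastforce
qed

lemma circ_normalize:
  assumes "v \<notin> epsM sc"
  shows "circ (sc (dual_inv_sqrt (circ v v)) v) (sc (dual_inv_sqrt (circ v v)) v) = 1"
  using dual_inv_sqrt_square[OF circ_self_pos[OF assms]] by (simp add: mult.assoc)

lemma gram_schmidt_step:
  assumes xx: "circ x x = 1" and du_xy: "dDu (circ x y) = 0" and du_yy: "dDu (circ y y) = 0"
    and indep: "resultants_indep sc x y"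
  obtains e s where "circ x e = 0" "circ e e = 1" "y = rscale sc (dRe (circ x y)) x + rscale sc s e"
proof -
  define t where "t = dRe (circ x y)"
  have xy: "circ x y = Dual t 0"
    using du_xy by (simp add: t_def dual_eq_iff)
  define v where "v = y - rscale sc t x"
  have xv: "circ x v = 0"
    by (simp add: v_def xy xx)
  have du_vv: "dDu (circ v v) = 0"
    using du_yy by (simp add: v_def xy xx circ_sym[of y x])
  have "Dual (- t) 0 = - Dual t 0"
    by (simp add: dual_eq_iff)
  then have "v = rscale sc (- t) x + rscale sc 1 y"
    by (simp add: v_def rscale_def)
  then have "v \<notin> epsM sc"
    using indep unfolding resultants_indep_def by fastforce
  then have c_pos: "0 < dRe (circ v v)"
    by (rule circ_self_pos)
  define e where "e = sc (dual_inv_sqrt (circ v v)) v"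
  have "Dual (sqrt (dRe (circ v v))) 0 * dual_inv_sqrt (circ v v) = 1"
    using c_pos by (simp add: dual_inv_sqrt_real[OF du_vv] dual_eq_iff)
  then have "rscale sc (sqrt (dRe (circ v v))) e = v"
    by (simp add: e_def rscale_def)
  then have "y = rscale sc t x + rscale sc (sqrt (dRe (circ v v))) e"
    by (simp add: v_def)
  moreover have "circ x e = 0"
    by (simp add: e_def xv)
  moreover have "circ e e = 1"
    unfolding e_def by (rule circ_normalize) fact
  ultimately show ?thesis
    using that unfolding t_def by blast
qed

lemma exists_orthogonal_not_in_epsM:
  assumes basis: "dbasis3 sc b"
    and xx: "circ x x = 1" and yy: "circ y y = 1" and xy: "circ x y = 0"
  obtains z where "z \<notin> epsM sc" "circ x z = 0" "circ y z = 0"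
proof -
  obtain r :: "real^3" where r: "r \<noteq> 0"
    "r \<bullet> (\<chi> k. dRe (circ x (b$k))) = 0" "r \<bullet> (\<chi> k. dRe (circ y (b$k))) = 0"
    by (rule exists_orthogonal_to_pair[where 'a = "real^3"]) simp
  \<comment> \<open>The inner products of m with x and y vanish modulo eps, so m and its projection z
    differ by an element of eps M.\<close>
  define m where "m = (\<Sum>k\<in>UNIV. rscale sc (r$k) (b$k))"
  have m_not_eps: "m \<notin> epsM sc"
    using real_combination_in_epsM_imp_zero[OF basis] r(1) unfolding m_def by blast
  have re_circ_m: "dRe (circ u m) = r \<bullet> (\<chi> k. dRe (circ u (b$k)))" for u
    by (simp add: m_def circ_sum_right dRe_sum inner_vec_def)
  define z where "z = m - sc (circ x m) x - sc (circ y m) y"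
  have "circ x z = 0" "circ y z = 0"
    using xy by (simp_all add: z_def xx yy circ_sym[of y x])
  moreover have "z \<notin> epsM sc"
  proof
    assume "z \<in> epsM sc"
    moreover have "sc (circ x m) x \<in> epsM sc" "sc (circ y m) y \<in> epsM sc"
      using r by (simp_all add: re_circ_m scale_in_epsM)
    ultimately have "z + sc (circ x m) x + sc (circ y m) y \<in> epsM sc"
      by (intro epsM_add)
    then show False
      using m_not_eps by (simp add: z_def)
  qed
  ultimately show ?thesis
    using that by blast
qed

lemma exists_Espace_containing_pair:
  assumes basis: "dbasis3 sc b" and xx: "circ x x = 1" and yy: "circ y y = 1"
    and indep: "resultants_indep sc x y" and du_xy: "dDu (circ x y) = 0"
  obtains P where "P \<in> Espace sc circ" "x \<in> P" "y \<in> P"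
proof -
  define t where "t = dRe (circ x y)"
  obtain e s where xe: "circ x e = 0" and ee: "circ e e = 1"
    and y: "y = rscale sc t x + rscale sc s e"
    using gram_schmidt_step[OF xx du_xy _ indep] yy unfolding t_def by auto
  obtain z where "z \<notin> epsM sc" "circ x z = 0" "circ e z = 0"
    using exists_orthogonal_not_in_epsM[OF basis xx ee xe] .
  then obtain f where ff: "circ f f = 1" and xf: "circ x f = 0" and ef: "circ e f = 0"
    using circ_normalize by fastforce
  define p :: "'m^3" where "p = vector [x, e, f]"
  have "circ (p$i) (p$j) = of_bool (i = j)" for i j
    using exhaust_3[of i] exhaust_3[of j] xx ee ff xe xf ef
      circ_sym[of e x] circ_sym[of f x] circ_sym[of f e]
    by (auto simp: p_def)
  then have "{u. \<exists>r. u = (\<Sum>k\<in>UNIV. rscale sc (r$k) (p$k))} \<in> Espace sc circ"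
    by (rule orthonormal_real_span_in_Espace)
  moreover have "x = (\<Sum>k\<in>UNIV. rscale sc (vector [1, 0, 0]$k) (p$k))"
    by (simp add: p_def sum_3)
  moreover have "y = (\<Sum>k\<in>UNIV. rscale sc (vector [t, s, 0]$k) (p$k))"
    by (simp add: p_def sum_3 y)
  ultimately show ?thesis
    using that by blast
qed

end

theorem proposition12:
  fixes sc :: "dual \<Rightarrow> 'm::ab_group_add \<Rightarrow> 'm"
    and circ :: "'m \<Rightarrow> 'm \<Rightarrow> dual"
    and OR :: "('m^3) set"
    and x y :: 'm
  assumes "free_rank3 sc"
    and "scalar_product sc circ"
    and "orientation sc OR"
    and "x \<notin> epsM sc" and "y \<notin> epsM sc"
    and "circ x x = 1" and "circ y y = 1"
    and "resultants_indep sc x y"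
  shows "dDu (circ x y) = 0 \<longleftrightarrow> axis sc circ x \<inter> axis sc circ y \<noteq> {}"
proof
  assume du_xy: "dDu (circ x y) = 0"
  obtain b where "module sc" and basis: "dbasis3 sc b"
    using assms(1) by (auto simp: free_rank3_def)
  then interpret dual_scalar_product sc circ
    using assms(2) by (intro dual_scalar_product.intro dual_scalar_product_axioms.intro)
  obtain P where "P \<in> Espace sc circ" "x \<in> P" "y \<in> P"
    using exists_Espace_containing_pair[OF basis assms(6-8) du_xy] .
  then show "axis sc circ x \<inter> axis sc circ y \<noteq> {}"
    by (auto simp: axis_def)
next
  assume "axis sc circ x \<inter> axis sc circ y \<noteq> {}"
  then show "dDu (circ x y) = 0"
    by (auto simp: axis_def Espace_def)
qed

end
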